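(* For every integer $m\ge2$, $\mathrm{disc}(4m+2,4)=2$.
   Context: For positive integers $n>k$, let $S_n$ be the set of permutations $\pi=(\pi_1,\dots,\pi_n)$ of $1,\dots,n$, with cyclic indexing $\pi_{n+i}=\pi_i$, and $s_i=\sum_{j=0}^{k-1}\pi_{i+j}$ for $i=1,\dots,n$. Define $\mathrm{disc}(\pi,k)=\max_{1\le i\le n}|s_i-\frac{k(n+1)}{2}|$ and $\mathrm{disc}(n,k)=\min_{\pi\in S_n}\mathrm{disc}(\pi,k)$. *)

theory Defs
  imports Complex_Main
begin

text \<open>Permutations of 1..n, represented as lists pi = [pi_1,...,pi_n]
  (0-based list indices: pi_(i+1) = pi ! i).\<close>
definition perms :: "nat \<Rightarrow> nat list set" where
  "perms n = {xs. distinct xs \<and> set xs = {1..n}}"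

text \<open>Cyclic window sum s_(i+1) = sum_(j<k) pi_(i+1+j), indices mod n.\<close>
definition wsum :: "nat list \<Rightarrow> nat \<Rightarrow> nat \<Rightarrow> nat" where
  "wsum xs k i = (\<Sum>j<k. xs ! ((i + j) mod length xs))"

definition disc_perm :: "nat list \<Rightarrow> nat \<Rightarrow> real" where
  "disc_perm xs k = Max ((\<lambda>i. \<bar>real (wsum xs k i) - real k * (real (length xs) + 1) / 2\<bar>) ` {0..<length xs})"

definition disc :: "nat \<Rightarrow> nat \<Rightarrow> real" where
  "disc n k = Min ((\<lambda>xs. disc_perm xs k) ` perms n)"

end

theory Submission
  imports Defs
begin

text \<open>
  Lower bound: if every window sum were within distance less than 2 of its mean 8m+6, then
  consecutive windows would differ by at most 2, i.e. |\<pi>(i+4) - \<pi>(i)| \<le> 2. As 4 has order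
  2m+1 modulo 4m+2, the sequence a(t) = \<pi>(p+4t) started at the entry \<pi>(p) = 1 runs once through
  the positions of one parity class before it returns. Being injective with steps of size at
  most 2, it is forced to be the zigzag 1, 2, 4, ..., 2m, 2m+1, 2m-1, ..., 3 or its mirror image.
  Its jumps of -2 and +2 around position p push the window sums at p+3 and at p+4 both down to
  the lowest admissible value, whence \<pi>(p+3) = \<pi>(p+7), contradicting injectivity.

  Upper bound: interleave a permutation z of 1..2m+1 with the complements 4m+3 - z. A window
  starting at an even position then sums to exactly 8m+6, one starting at an odd position
  differs from this by z(j+2) - z(j), and for a suitable zigzag z these differences are at
  most 2 in absolute value.
\<close>

lemma perms_length: "xs \<in> perms n \<Longrightarrow> length xs = n"
  unfolding perms_def by (auto dest: distinct_card)

lemma finite_perms: "finite (perms n)"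
proof (rule finite_subset)
  show "perms n \<subseteq> {xs. set xs \<subseteq> {1..n} \<and> length xs = n}"
    using perms_length by (auto simp: perms_def)
  show "finite {xs. set xs \<subseteq> {1..n} \<and> length xs = n}"
    by (rule finite_lists_length_eq) simp
qed

lemma disc_perm_le_iff:
  assumes "xs \<noteq> []"
  shows "disc_perm xs k \<le> d \<longleftrightarrow>
    (\<forall>i<length xs. \<bar>real (wsum xs k i) - real k * (real (length xs) + 1) / 2\<bar> \<le> d)"
  using assms unfolding disc_perm_def by auto

lemma disc_perm_less_iff:
  assumes "xs \<noteq> []"
  shows "disc_perm xs k < d \<longleftrightarrow>
    (\<forall>i<length xs. \<bar>real (wsum xs k i) - real k * (real (length xs) + 1) / 2\<bar> < d)"
  using assms unfolding disc_perm_def by auto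

lemma disc_eqI:
  assumes "xs \<in> perms n" "disc_perm xs k \<le> d" "\<And>ys. ys \<in> perms n \<Longrightarrow> d \<le> disc_perm ys k"
  shows "disc n k = d"
  unfolding disc_def
proof (rule Min_eqI)
  show "finite ((\<lambda>xs. disc_perm xs k) ` perms n)"
    using finite_perms by simp
  show "d \<in> (\<lambda>xs. disc_perm xs k) ` perms n"
    using assms antisym[of "disc_perm xs k" d] by (metis image_eqI)
qed (use assms(3) in blast)

lemma wsum_mod: "wsum xs k (i mod length xs) = wsum xs k i"
  unfolding wsum_def by (simp add: mod_add_left_eq)

lemma middle_values_ge:
  fixes a :: "nat \<Rightarrow> int"
  assumes inj: "inj_on a {..<L}" and pos: "\<And>x. 1 \<le> a x" and a0: "a 0 = 1"
    and ends: "\<And>s. 1 \<le> s \<Longrightarrow> s \<le> t \<Longrightarrow> {a s, a (L - s)} = {2 * int s, 2 * int s + 1}"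
    and x: "t < x" "x < L - t"
  shows "2 * int t + 2 \<le> a x"
proof (rule ccontr)
  assume "\<not> ?thesis"
  then have small: "a x \<le> 2 * int t + 1" by simp
  have "a x \<noteq> a 0"
    using x inj_on_eq_iff[OF inj, of x 0] by auto
  then have "2 \<le> a x" using pos[of x] a0 by simp
  define s where "s = nat (a x div 2)"
  have s: "1 \<le> s" "s \<le> t" "a x \<in> {2 * int s, 2 * int s + 1}"
    using \<open>2 \<le> a x\<close> small unfolding s_def by auto
  then have "a x = a s \<or> a x = a (L - s)"
    using ends[of s] by auto
  moreover have "s < L" "L - s < L" "x < L" using s x by auto
  ultimately have "x = s \<or> x = L - s"
    using inj_on_eq_iff[OF inj] by auto
  then show False using s x by auto
qed

lemma step_bounded_cycle_zigzag:
  fixes a :: "nat \<Rightarrow> int"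
  assumes L: "L = 2 * m + 1" and m: "1 \<le> m"
    and inj: "inj_on a {..<L}" and pos: "\<And>x. 1 \<le> a x"
    and a0: "a 0 = 1" and aL: "a L = 1"
    and step: "\<And>t. \<bar>a (Suc t) - a t\<bar> \<le> 2"
  shows "\<exists>c\<in>{0, 1}. \<forall>s. 1 \<le> s \<longrightarrow> s \<le> m \<longrightarrow>
           a s = 2 * int s + c \<and> a (L - s) = 2 * int s + 1 - c"
proof -
  define c where "c = a 1 - 2"
  have pair_values: "{a s, a (L - s)} = {2 * int s, 2 * int s + 1}"
    if "a s = 2 * int s + c \<and> a (L - s) = 2 * int s + 1 - c" "c \<in> {0, 1}" for s
    using that by auto
  have mirror_ne: "a s \<noteq> a (L - s)" if "0 < s" "s < L" for s
  proof
    assume "a s = a (L - s)"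
    then have "s = L - s" using that inj_on_eq_iff[OF inj, of s "L - s"] by auto
    then show False using L by presburger
  qed
  have a1: "a 1 \<noteq> a 0" using inj_on_eq_iff[OF inj, of 1 0] L m by auto
  have c: "c \<in> {0, 1}"
    using step[of 0] a1 a0 pos[of 1] unfolding c_def by auto
  have "t \<le> m \<longrightarrow> (\<forall>s. 1 \<le> s \<longrightarrow> s \<le> t \<longrightarrow> a s = 2 * int s + c \<and> a (L - s) = 2 * int s + 1 - c)"
    if "1 \<le> t" for t
    using that
  proof (induction t rule: nat_induct_at_least)
    case base
    have "a (L - 1) \<le> 3" using step[of "L - 1"] aL L by simp
    moreover have "2 \<le> a (L - 1)"
      using middle_values_ge[OF inj pos a0, of 0 "L - 1"] L m by simp
    moreover have "a (L - 1) \<noteq> a 1"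
      using mirror_ne[of 1] L m by auto
    ultimately show ?case using c unfolding c_def by (auto simp: le_Suc_eq)
  next
    case (Suc t)
    show ?case
    proof
      assume "Suc t \<le> m"
      then have IH: "a s = 2 * int s + c \<and> a (L - s) = 2 * int s + 1 - c"
        if "1 \<le> s" "s \<le> t" for s
        using Suc.IH that by auto
      have "Suc (L - Suc t) = L - t" using \<open>Suc t \<le> m\<close> L by simp
      then have "a (Suc t) \<le> 2 * int t + 2 + c" "a (L - Suc t) \<le> 2 * int t + 3 - c"
        using Suc.hyps IH[of t] step[of t] step[of "L - Suc t"] by auto
      moreover have "2 * int t + 2 \<le> a (Suc t)" "2 * int t + 2 \<le> a (L - Suc t)"
        using middle_values_ge[OF inj pos a0, of t] pair_values[OF IH c] \<open>Suc t \<le> m\<close> L by auto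
      moreover have "a (Suc t) \<noteq> a (L - Suc t)"
        using mirror_ne[of "Suc t"] \<open>Suc t \<le> m\<close> L by auto
      ultimately have "a (Suc t) = 2 * int (Suc t) + c \<and> a (L - Suc t) = 2 * int (Suc t) + 1 - c"
        using c by auto
      then show "\<forall>s. 1 \<le> s \<longrightarrow> s \<le> Suc t \<longrightarrow> a s = 2 * int s + c \<and> a (L - s) = 2 * int s + 1 - c"
        using IH by (auto simp: le_Suc_eq)
    qed
  qed
  then show ?thesis using c m by blast
qed

lemma mod_add_mult_4_inj:
  fixes L p x y :: nat
  assumes "odd L" "x < L" "y < L" "(p + 4 * x) mod (2 * L) = (p + 4 * y) mod (2 * L)"
  shows "x = y"
proof -
  have "int (2 * L) dvd int (p + 4 * x) - int (p + 4 * y)"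
    using assms(4) by (metis mod_eq_dvd_iff of_nat_mod)
  then have "2 * int L dvd 2 * (2 * (int x - int y))"
    by (simp add: algebra_simps)
  then have "int L dvd 2 * (int x - int y)"
    by (metis dvd_mult_cancel_left zero_neq_numeral)
  moreover have "coprime (int L) 2"
    using assms(1) by simp
  ultimately have "int L dvd int x - int y"
    by (metis coprime_dvd_mult_right_iff)
  then show ?thesis
    using assms(2,3) dvd_imp_le_int[of "int x - int y" "int L"] by linarith
qed

lemma cyclic_window_sums_spread:
  fixes P :: "nat \<Rightarrow> int" and c :: int
  assumes m: "2 \<le> m"
    and P_mod: "\<And>i. P (i mod (4 * m + 2)) = P i"
    and P_inj: "\<And>i j. P i = P j \<Longrightarrow> i mod (4 * m + 2) = j mod (4 * m + 2)"
    and P_pos: "\<And>i. 1 \<le> P i" and p: "P p = 1"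
  shows "\<exists>i. 1 < \<bar>P i + P (i + 1) + P (i + 2) + P (i + 3) - c\<bar>"
proof (rule ccontr)
  define n where "n = 4 * m + 2"
  define L where "L = 2 * m + 1"
  define w where "w i = P i + P (i + 1) + P (i + 2) + P (i + 3)" for i
  assume "\<not> ?thesis"
  then have w_close: "\<bar>w i - c\<bar> \<le> 1" for i
    unfolding w_def by (simp add: not_less)
  have w_bounds: "c - 1 \<le> w i" "w i \<le> c + 1" for i
    using w_close[of i] by (simp_all add: abs_le_iff)
  have w_Suc: "w (Suc i) = w i + P (i + 4) - P i" for i
    unfolding w_def by (simp add: eval_nat_numeral)
  have step4: "\<bar>P (i + 4) - P i\<bar> \<le> 2" for i
    using w_Suc[of i] w_bounds[of i] w_bounds[of "Suc i"] by linarith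
  have P_shift: "P (i + k * n) = P i" for i k
    by (metis P_mod mod_mult_self1 n_def)
  define a where "a t = P (p + 4 * t)" for t
  have a_inj: "inj_on a {..<L}"
  proof (rule inj_onI)
    fix x y assume "x \<in> {..<L}" "y \<in> {..<L}" "a x = a y"
    then have "(p + 4 * x) mod (2 * L) = (p + 4 * y) mod (2 * L)"
      using P_inj[of "p + 4 * x" "p + 4 * y"] unfolding a_def L_def by simp
    moreover have "odd L" unfolding L_def by simp
    ultimately show "x = y"
      using mod_add_mult_4_inj[of L x y p] \<open>x \<in> {..<L}\<close> \<open>y \<in> {..<L}\<close> by simp
  qed
  have a_pos: "1 \<le> a t" for t
    unfolding a_def by (rule P_pos)
  have a0: "a 0 = 1"
    unfolding a_def using p by simp
  have aL: "a L = 1"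
  proof -
    have "p + 4 * L = p + 2 * n" unfolding L_def n_def by simp
    then show ?thesis using p P_shift[of p 2] unfolding a_def by (simp only: mult.commute)
  qed
  have a_step: "\<bar>a (Suc t) - a t\<bar> \<le> 2" for t
    using step4[of "p + 4 * t"] unfolding a_def by (simp add: ac_simps)
  obtain c' where zigzag:
    "\<And>s. 1 \<le> s \<Longrightarrow> s \<le> m \<Longrightarrow> a s = 2 * int s + c' \<and> a (L - s) = 2 * int s + 1 - c'"
    using step_bounded_cycle_zigzag[OF L_def _ a_inj a_pos a0 aL a_step] m by auto
  have "a 2 - a 1 = 2"
    using zigzag[of 1] zigzag[of 2] m by simp
  then have "P (p + 8) - P (p + 4) = 2"
    unfolding a_def by simp
  moreover have "P (p + 6) - P (p + 2) = -2"
  proof -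
    have "p + 4 * (L - m) = (p + 2) + 1 * n" "p + 4 * (L - (m - 1)) = (p + 6) + 1 * n"
      using m unfolding L_def n_def by simp_all
    then have "P (p + 2) = a (L - m)" "P (p + 6) = a (L - (m - 1))"
      unfolding a_def by (simp_all only: P_shift)
    moreover have "a (L - m) = 2 * int m + 1 - c'"
      using zigzag[of m] m by simp
    moreover have "a (L - (m - 1)) = 2 * int m - 1 - c'"
      using zigzag[of "m - 1"] m by (simp add: of_nat_diff)
    ultimately show ?thesis by linarith
  qed
  moreover have "w (p + 3) = w (p + 2) + P (p + 6) - P (p + 2)"
    "w (p + 4) = w (p + 3) + P (p + 7) - P (p + 3)"
    "w (p + 5) = w (p + 4) + P (p + 8) - P (p + 4)"
    using w_Suc[of "p + 2"] w_Suc[of "p + 3"] w_Suc[of "p + 4"] by (simp_all add: eval_nat_numeral)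
  \<comment> \<open>so w drops by 2 from p+2 to p+3 and rises by 2 from p+4 to p+5: both w (p+3) and w (p+4) equal c - 1\<close>
  ultimately have "P (p + 3) = P (p + 7)"
    using w_bounds[of "p + 2"] w_bounds[of "p + 3"] w_bounds[of "p + 4"] w_bounds[of "p + 5"]
    by linarith
  then have "(p + 3) mod n = (p + 7) mod n"
    unfolding n_def by (rule P_inj)
  then have "n dvd 4"
    using mod_eq_dvd_iff_nat[of "p + 3" "p + 7" n] by simp
  then show False
    using m dvd_imp_le[of n 4] unfolding n_def by simp
qed

lemma disc_perm_ge_2:
  assumes m: "2 \<le> m" and xs: "xs \<in> perms (4 * m + 2)"
  shows "2 \<le> disc_perm xs 4"
proof (rule ccontr)
  define n where "n = 4 * m + 2"
  have len: "length xs = n" and "distinct xs" and set_xs: "set xs = {1..n}"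
    using xs perms_length unfolding perms_def n_def by auto
  have centre: "real 4 * (real (length xs) + 1) / 2 = 8 * real m + 6"
    using len unfolding n_def by simp
  have "xs \<noteq> []" using len unfolding n_def by auto
  define P where "P i = int (xs ! (i mod n))" for i
  assume "\<not> 2 \<le> disc_perm xs 4"
  then have close: "\<bar>real (wsum xs 4 i) - (8 * real m + 6)\<bar> < 2" if "i < n" for i
    using that disc_perm_less_iff[OF \<open>xs \<noteq> []\<close>, of 4 2, unfolded centre] len by simp
  have windows: "\<bar>P i + P (i + 1) + P (i + 2) + P (i + 3) - (8 * int m + 6)\<bar> \<le> 1" for i
  proof -
    have "\<bar>real (wsum xs 4 i) - (8 * real m + 6)\<bar> < 2"
      using close[of "i mod n"] wsum_mod[of xs 4 i] len unfolding n_def by simp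
    then have "\<bar>int (wsum xs 4 i) - (8 * int m + 6)\<bar> < 2" by linarith
    moreover have "int (wsum xs 4 i) = P i + P (i + 1) + P (i + 2) + P (i + 3)"
      unfolding wsum_def P_def len by (simp add: eval_nat_numeral)
    ultimately show ?thesis by simp
  qed
  have P_mod: "P (i mod n) = P i" for i
    unfolding P_def by simp
  have P_inj: "i mod n = j mod n" if "P i = P j" for i j
    using that \<open>distinct xs\<close> len unfolding P_def n_def by (simp add: nth_eq_iff_index_eq)
  have P_pos: "1 \<le> P i" for i
    using set_xs len nth_mem[of "i mod n" xs] unfolding P_def n_def by auto
  obtain p where "p < n" "xs ! p = 1"
    using set_xs len in_set_conv_nth[of 1 xs] unfolding n_def by auto
  then have "P p = 1" unfolding P_def by simp
  from cyclic_window_sums_spread[OF m, of P, unfolded n_def[symmetric], OF P_mod P_inj P_pos this]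
  obtain i where "1 < \<bar>P i + P (i + 1) + P (i + 2) + P (i + 3) - (8 * int m + 6)\<bar>"
    by blast
  with windows[of i] show False by simp
qed

definition interleave :: "(nat \<Rightarrow> nat) \<Rightarrow> nat \<Rightarrow> nat \<Rightarrow> nat" where
  "interleave z L i =
     (if even i then z ((i div 2) mod L) else 2 * L + 1 - z ((i div 2) mod L))"

lemma interleave_mod: "interleave z L (i mod (2 * L)) = interleave z L i"
proof -
  have "i mod (2 * L) div 2 = (i div 2) mod L"
    by (simp add: mod_mult2_eq)
  moreover have "even (i mod (2 * L)) = even i"
    by (simp add: dvd_mod_iff)
  ultimately show ?thesis unfolding interleave_def by simp
qed

lemma interleave_perm:
  assumes z: "z ` {..<L} = {1..L}"
  shows "map (interleave z L) [0..<2 * L] \<in> perms (2 * L)"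
proof -
  have range: "interleave z L i \<in> {1..2 * L}" if "i < 2 * L" for i
  proof -
    have "(i div 2) mod L < L" using that by simp
    then have "z ((i div 2) mod L) \<in> {1..L}" using z by blast
    then show ?thesis unfolding interleave_def by auto
  qed
  have onto: "v \<in> interleave z L ` {0..<2 * L}" if v: "v \<in> {1..2 * L}" for v
  proof (cases "v \<le> L")
    case True
    then have "v \<in> z ` {..<L}" using v z by simp
    then obtain u where "u < L" "z u = v" by blast
    then have "2 * u \<in> {0..<2 * L}" "v = interleave z L (2 * u)"
      by (simp_all add: interleave_def)
    then show ?thesis by (rule rev_image_eqI)
  next
    case False
    then have "2 * L + 1 - v \<in> z ` {..<L}" using v z by auto
    then obtain u where "u < L" "z u = 2 * L + 1 - v" by (metis imageE lessThan_iff)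
    then have "2 * u + 1 \<in> {0..<2 * L}" "v = interleave z L (2 * u + 1)"
      using v by (simp_all add: interleave_def)
    then show ?thesis by (rule rev_image_eqI)
  qed
  have "interleave z L ` {0..<2 * L} = {1..2 * L}"
    using range onto by (intro equalityI image_subsetI subsetI) simp_all
  then have set_eq: "set (map (interleave z L) [0..<2 * L]) = {1..2 * L}"
    by (simp only: set_map set_upt)
  then have "distinct (map (interleave z L) [0..<2 * L])"
    by (intro card_distinct) (simp only: card_atLeastAtMost length_map length_upt)
  with set_eq show ?thesis
    unfolding perms_def by simp
qed

lemma wsum_interleave:
  assumes "0 < L" and z: "z ` {..<L} = {1..L}"
    and step: "\<And>j. \<bar>int (z ((j + 2) mod L)) - int (z (j mod L))\<bar> \<le> d"
  shows "\<bar>int (wsum (map (interleave z L) [0..<2 * L]) 4 i) - (4 * int L + 2)\<bar> \<le> d"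
proof -
  define Z where "Z j = int (z (j mod L))" for j
  have Z_le: "Z j \<le> int L" for j
    using z \<open>0 < L\<close> unfolding Z_def by (metis atLeastAtMost_iff image_eqI lessThan_iff
        mod_less_divisor of_nat_le_iff)
  have even: "int (interleave z L (2 * j)) = Z j"
    and odd: "int (interleave z L (2 * j + 1)) = 2 * int L + 1 - Z j" for j
    using Z_le[of j] unfolding interleave_def Z_def by (simp_all add: of_nat_diff)
  have wsum_eq: "int (wsum (map (interleave z L) [0..<2 * L]) 4 i) =
      int (interleave z L i) + int (interleave z L (i + 1))
      + int (interleave z L (i + 2)) + int (interleave z L (i + 3))" for i
  proof -
    have "int (wsum (map (interleave z L) [0..<2 * L]) 4 i) = (\<Sum>j<4. int (interleave z L (i + j)))"
      unfolding wsum_def using \<open>0 < L\<close> by (simp add: interleave_mod)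
    then show ?thesis by (simp add: eval_nat_numeral)
  qed
  show ?thesis
  proof (cases "even i")
    case True
    then obtain j where i: "i = 2 * j" by blast
    have e: "2 * j + 2 = 2 * (j + 1)" "2 * j + 3 = 2 * (j + 1) + 1" by simp_all
    show ?thesis
      using wsum_eq[of "2 * j", unfolded e even odd] step[of j] i by simp
  next
    case False
    then obtain j where i: "i = 2 * j + 1" by (metis oddE)
    have e: "2 * j + 1 + 1 = 2 * (j + 1)" "2 * j + 1 + 2 = 2 * (j + 1) + 1"
      "2 * j + 1 + 3 = 2 * (j + 2)" by simp_all
    show ?thesis
      using wsum_eq[of "2 * j + 1", unfolded e even odd] step[of j] i unfolding Z_def by simp
  qed
qed

text \<open>Read in steps of two, zigzag m runs through 1, 2, 4, ..., 2m, 2m+1, 2m-1, ..., 3.\<close>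

definition zigzag :: "nat \<Rightarrow> nat \<Rightarrow> nat" where
  "zigzag m u = (if u = 0 then 1 else if even u then u else 2 * m + 2 - u)"

lemma zigzag_image: "zigzag m ` {..<2 * m + 1} = {1..2 * m + 1}"
proof
  show "zigzag m ` {..<2 * m + 1} \<subseteq> {1..2 * m + 1}"
    by (auto simp: zigzag_def)
next
  show "{1..2 * m + 1} \<subseteq> zigzag m ` {..<2 * m + 1}"
  proof
    fix v assume v: "v \<in> {1..2 * m + 1}"
    have "1 \<le> v" using v by simp
    then have "v = 1 \<or> even v \<or> odd v \<and> 3 \<le> v" by presburger
    then consider "v = 1" | "even v" | "odd v" "3 \<le> v" by blast
    then show "v \<in> zigzag m ` {..<2 * m + 1}"
    proof cases
      case 1
      then show ?thesis by (force simp: zigzag_def)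
    next
      case 2
      moreover have "v \<noteq> 2 * m + 1" using 2 by presburger
      ultimately have "zigzag m v = v" "v < 2 * m + 1" using v by (auto simp: zigzag_def)
      then show ?thesis by (metis image_eqI lessThan_iff)
    next
      case 3
      then have "zigzag m (2 * m + 2 - v) = v" "2 * m + 2 - v < 2 * m + 1"
        using v by (auto simp: zigzag_def)
      then show ?thesis by (metis image_eqI lessThan_iff)
    qed
  qed
qed

lemma zigzag_step:
  "\<bar>int (zigzag m ((j + 2) mod (2 * m + 1))) - int (zigzag m (j mod (2 * m + 1)))\<bar> \<le> 2"
proof -
  define u where "u = j mod (2 * m + 1)"
  have "(j + 2) mod (2 * m + 1) = (u + 2) mod (2 * m + 1)"
    unfolding u_def by (rule mod_add_left_eq[symmetric])
  moreover consider "u + 2 < 2 * m + 1" | "u + 2 = 2 * m + 1" | "u + 2 = 2 * m + 2"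
    using mod_less_divisor[of "2 * m + 1" j] unfolding u_def by linarith
  then have "\<bar>int (zigzag m ((u + 2) mod (2 * m + 1))) - int (zigzag m u)\<bar> \<le> 2"
  proof cases
    case 1
    then show ?thesis by (auto simp: zigzag_def of_nat_diff)
  next
    case 2
    then have "odd u" "u \<noteq> 0" by presburger+
    with 2 show ?thesis by (simp add: zigzag_def)
  next
    case 3
    then have u: "u = 2 * m" by simp
    show ?thesis
    proof (cases "m = 0")
      case True
      then show ?thesis using u by (simp add: zigzag_def)
    next
      case False
      have "(u + 2) mod (2 * m + 1) = 1 mod (2 * m + 1)"
        using mod_add_self2[of 1 "2 * m + 1"] u by (simp add: add.commute)
      then have "(u + 2) mod (2 * m + 1) = 1" using False by simp
      then show ?thesis using u False by (simp add: zigzag_def)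
    qed
  qed
  ultimately show ?thesis unfolding u_def by simp
qed

definition zigzag_perm :: "nat \<Rightarrow> nat list" where
  "zigzag_perm m = map (interleave (zigzag m) (2 * m + 1)) [0..<2 * (2 * m + 1)]"

lemma zigzag_perm_perms: "zigzag_perm m \<in> perms (4 * m + 2)"
  using interleave_perm[OF zigzag_image, of m] unfolding zigzag_perm_def by simp

lemma disc_perm_zigzag_le_2: "disc_perm (zigzag_perm m) 4 \<le> 2"
proof -
  have "zigzag_perm m \<noteq> []" unfolding zigzag_perm_def by simp
  have centre: "real 4 * (real (length (zigzag_perm m)) + 1) / 2 = 8 * real m + 6"
    unfolding zigzag_perm_def by simp
  have "\<bar>real (wsum (zigzag_perm m) 4 i) - (8 * real m + 6)\<bar> \<le> 2" for i
  proof -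
    have "\<bar>int (wsum (zigzag_perm m) 4 i) - (4 * int (2 * m + 1) + 2)\<bar> \<le> 2"
      unfolding zigzag_perm_def by (rule wsum_interleave[OF _ zigzag_image zigzag_step]) simp
    then have "\<bar>int (wsum (zigzag_perm m) 4 i) - (8 * int m + 6)\<bar> \<le> 2"
      by simp
    then show ?thesis by linarith
  qed
  then show ?thesis
    unfolding disc_perm_le_iff[OF \<open>zigzag_perm m \<noteq> []\<close>] centre by blast
qed

theorem proposition2p2:
  fixes m :: nat
  assumes "m \<ge> 2"
  shows "disc (4 * m + 2) 4 = 2"
  using zigzag_perm_perms disc_perm_zigzag_le_2 disc_perm_ge_2[OF assms]
  by (rule disc_eqI)

end
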